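(* For every extended regular expression $r$ and every literal $B$, \[ \llbracket \Delta_B(r)\rrbracket \;\supseteq\; \bigcup_{a\in B}\llbracket \partial_a(r)\rrbracket \qquad\text{and}\qquad \llbracket \nabla_B(r)\rrbracket \;\subseteq\; \bigcap_{a\in B}\llbracket \partial_a(r)\rrbracket , \] where the empty intersection is $\Sigma^*$.
   Context: $\Sigma$ is a countable (possibly infinite) alphabet, $\Sigma^*$ the set of finite words, $\epsilon$ the empty word. Literals are sets of symbols drawn from a fixed family $U\subseteq\mathcal P(\Sigma)$ containing $\emptyset$, $\Sigma$ and all singletons and closed under union, intersection and complement $\overline{A}=\Sigma\setminus A$. Extended regular expressions (EREs) are generated by $r,s ::= \epsilon \mid A \mid r+s \mid r\cdot s \mid r^* \mid r\,\&\,s \mid \neg r$ with $A$ a literal; the empty literal is written $\emptyset$. Semantics: $\llbracket\epsilon\rrbracket=\{\epsilon\}$, $\llbracket A\rrbracket=A$ (words of length one), $\llbracket r+s\rrbracket=\llbracket r\rrbracket\cup\llbracket s\rrbracket$, $\llbracket r\cdot s\rrbracket$ the concatenation, $\llbracket r^*\rrbracket=\llbracket r\rrbracket^*$, $\llbracket r\&s\rrbracket=\llbracket r\rrbracket\cap\llbracket s\rrbracket$, $\llbracket\neg r\rrbracket=\Sigma^*\setminus\llbracket r\rrbracket$. Nullability: $\nu(\epsilon)=\nu(r^* )=\mathit{true}$, $\nu(A)=\mathit{false}$, $\nu(r+s)=\nu(r)\vee\nu(s)$, $\nu(r\cdot s)=\nu(r\&s)=\nu(r)\wedge\nu(s)$,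 $\nu(\neg r)=\neg\nu(r)$. Brzozowski derivative for $a\in\Sigma$: $\partial_a(\epsilon)=\emptyset$; $\partial_a(A)=\epsilon$ if $a\in A$, else $\emptyset$; $\partial_a(r+s)=\partial_a(r)+\partial_a(s)$; $\partial_a(r\cdot s)=\partial_a(r)\cdot s+\partial_a(s)$ if $\nu(r)$, and $\partial_a(r)\cdot s$ otherwise; $\partial_a(r^* )=\partial_a(r)\cdot r^*$; $\partial_a(r\&s)=\partial_a(r)\&\partial_a(s)$; $\partial_a(\neg r)=\neg\partial_a(r)$. Positive and negative derivatives with respect to a nonempty literal $B$ are defined by simultaneous recursion: $\Delta_B(\epsilon)=\nabla_B(\epsilon)=\emptyset$; $\Delta_B(A)=\epsilon$ if $A\cap B\neq\emptyset$, else $\emptyset$; $\nabla_B(A)=\epsilon$ if $B\subseteq A$ (i.e. $B\cap\overline{A}=\emptyset$), else $\emptyset$; for $\square\in\{\Delta,\nabla\}$: $\square_B(r+s)=\square_B(r)+\square_B(s)$, $\square_B(r\cdot s)=\square_B(r)\cdot s+\square_B(s)$ if $\nu(r)$ and $\square_B(r)\cdot s$ otherwise, $\square_B(r^* )=\square_B(r)\cdot r^*$, $\square_B(r\&s)=\square_B(r)\&\square_B(s)$; and $\Delta_B(\neg r)=\neg\nabla_B(r)$, $\nabla_B(\neg r)=\neg\Delta_B(r)$. For the empty literal, $\Delta_\emptyset(r)=\emptyset$ and $\nabla_\emptyset(r)=\neg\emptyset$ (denoting $\Sigma^*$). *)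

theory Defs
  imports "HOL-Library.Countable"
begin

datatype 'a ere =
    Eps
  | Lit "'a set"
  | Alt "'a ere" "'a ere"
  | Cat "'a ere" "'a ere"
  | Star "'a ere"
  | Inter "'a ere" "'a ere"
  | Neg "'a ere"

definition literal_family :: "'a set set \<Rightarrow> bool" where
  "literal_family U \<longleftrightarrow> {} \<in> U \<and> UNIV \<in> U \<and> (\<forall>a. {a} \<in> U) \<and>
     (\<forall>A\<in>U. \<forall>B\<in>U. A \<union> B \<in> U \<and> A \<inter> B \<in> U) \<and> (\<forall>A\<in>U. - A \<in> U)"

fun ere_over :: "'a set set \<Rightarrow> 'a ere \<Rightarrow> bool" where
  "ere_over U Eps = True"
| "ere_over U (Lit A) = (A \<in> U)"
| "ere_over U (Alt r s) = (ere_over U r \<and> ere_over U s)"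
| "ere_over U (Cat r s) = (ere_over U r \<and> ere_over U s)"
| "ere_over U (Star r) = ere_over U r"
| "ere_over U (Inter r s) = (ere_over U r \<and> ere_over U s)"
| "ere_over U (Neg r) = ere_over U r"

definition conc :: "'a list set \<Rightarrow> 'a list set \<Rightarrow> 'a list set" where
  "conc L M = {u @ v | u v. u \<in> L \<and> v \<in> M}"

inductive_set kstar :: "'a list set \<Rightarrow> 'a list set" for L where
  kstar_Nil: "[] \<in> kstar L"
| kstar_app: "u \<in> L \<Longrightarrow> v \<in> kstar L \<Longrightarrow> u @ v \<in> kstar L"

fun lang :: "'a ere \<Rightarrow> 'a list set" where
  "lang Eps = {[]}"
| "lang (Lit A) = {[a] | a. a \<in> A}"
| "lang (Alt r s) = lang r \<union> lang s"
| "lang (Cat r s) = conc (lang r) (lang s)"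
| "lang (Star r) = kstar (lang r)"
| "lang (Inter r s) = lang r \<inter> lang s"
| "lang (Neg r) = UNIV - lang r"

fun nullable :: "'a ere \<Rightarrow> bool" where
  "nullable Eps = True"
| "nullable (Lit A) = False"
| "nullable (Alt r s) = (nullable r \<or> nullable s)"
| "nullable (Cat r s) = (nullable r \<and> nullable s)"
| "nullable (Star r) = True"
| "nullable (Inter r s) = (nullable r \<and> nullable s)"
| "nullable (Neg r) = (\<not> nullable r)"

fun deriv :: "'a \<Rightarrow> 'a ere \<Rightarrow> 'a ere" where
  "deriv a Eps = Lit {}"
| "deriv a (Lit A) = (if a \<in> A then Eps else Lit {})"
| "deriv a (Alt r s) = Alt (deriv a r) (deriv a s)"
| "deriv a (Cat r s) = (if nullable r then Alt (Cat (deriv a r) s) (deriv a s)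
                        else Cat (deriv a r) s)"
| "deriv a (Star r) = Cat (deriv a r) (Star r)"
| "deriv a (Inter r s) = Inter (deriv a r) (deriv a s)"
| "deriv a (Neg r) = Neg (deriv a r)"

fun pos_der :: "'a set \<Rightarrow> 'a ere \<Rightarrow> 'a ere"
and neg_der :: "'a set \<Rightarrow> 'a ere \<Rightarrow> 'a ere" where
  "pos_der B Eps = Lit {}"
| "pos_der B (Lit A) = (if A \<inter> B \<noteq> {} then Eps else Lit {})"
| "pos_der B (Alt r s) = Alt (pos_der B r) (pos_der B s)"
| "pos_der B (Cat r s) = (if nullable r then Alt (Cat (pos_der B r) s) (pos_der B s)
                          else Cat (pos_der B r) s)"
| "pos_der B (Star r) = Cat (pos_der B r) (Star r)"
| "pos_der B (Inter r s) = Inter (pos_der B r) (pos_der B s)"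
| "pos_der B (Neg r) = Neg (neg_der B r)"
| "neg_der B Eps = Lit {}"
| "neg_der B (Lit A) = (if B \<subseteq> A then Eps else Lit {})"
| "neg_der B (Alt r s) = Alt (neg_der B r) (neg_der B s)"
| "neg_der B (Cat r s) = (if nullable r then Alt (Cat (neg_der B r) s) (neg_der B s)
                          else Cat (neg_der B r) s)"
| "neg_der B (Star r) = Cat (neg_der B r) (Star r)"
| "neg_der B (Inter r s) = Inter (neg_der B r) (neg_der B s)"
| "neg_der B (Neg r) = Neg (pos_der B r)"

definition Delta :: "'a set \<Rightarrow> 'a ere \<Rightarrow> 'a ere" where
  "Delta B r = (if B = {} then Lit {} else pos_der B r)"

definition Nabla :: "'a set \<Rightarrow> 'a ere \<Rightarrow> 'a ere" where
  "Nabla B r = (if B = {} then Neg (Lit {}) else neg_der B r)"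

end

theory Submission
  imports Defs
begin

text \<open>
  For a symbol a of a nonempty literal B, the positive and negative derivatives
  sandwich the Brzozowski derivative:
     lang (neg_der B r) \<subseteq> lang (deriv a r) \<subseteq> lang (pos_der B r).
  This is proved by a single structural induction on r, carrying both inclusions
  together because negation swaps them: pos_der B (Neg r) = Neg (neg_der B r),
  so the upper bound for Neg r is the complement of the lower bound for r, and
  vice versa.  The literal case is the observation that a \<in> A \<and> a \<in> B makes
  A \<inter> B nonempty while B \<subseteq> A forces a \<in> A; all other constructors act
  monotonically on languages (concatenation needs the lemma conc_mono).
  The theorem then follows by taking the union, resp. intersection, over a \<in> B;
  the empty literal is handled by the conventions in Delta and Nabla.
\<close>

lemma conc_mono: "L \<subseteq> L' \<Longrightarrow> M \<subseteq> M' \<Longrightarrow> conc L M \<subseteq> conc L' M'"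
  unfolding conc_def by blast

lemma deriv_sandwich:
  assumes "a \<in> B"
  shows "lang (deriv a r) \<subseteq> lang (pos_der B r) \<and> lang (neg_der B r) \<subseteq> lang (deriv a r)"
proof (induction r)
  case (Lit A)
  show ?case using assms by auto
next
  case (Cat r s)
  then have "conc (lang (deriv a r)) (lang s) \<subseteq> conc (lang (pos_der B r)) (lang s)"
        and "conc (lang (neg_der B r)) (lang s) \<subseteq> conc (lang (deriv a r)) (lang s)"
    by (simp_all add: conc_mono)
  with Cat.IH show ?case by auto
next
  case (Star r)
  then have "conc (lang (deriv a r)) (kstar (lang r)) \<subseteq> conc (lang (pos_der B r)) (kstar (lang r))"
        and "conc (lang (neg_der B r)) (kstar (lang r)) \<subseteq> conc (lang (deriv a r)) (kstar (lang r))"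
    by (simp_all add: conc_mono)
  then show ?case by simp
next
  case (Neg r)
  then show ?case by auto
qed auto

theorem lemma1:
  fixes U :: "('a::countable) set set" and r :: "'a ere" and B :: "'a set"
  assumes "literal_family U" and "ere_over U r" and "B \<in> U"
  shows "(\<Union>a\<in>B. lang (deriv a r)) \<subseteq> lang (Delta B r)
         \<and> lang (Nabla B r) \<subseteq> (\<Inter>a\<in>B. lang (deriv a r))"
proof (cases "B = {}")
  case True
  then show ?thesis by (simp add: Delta_def Nabla_def)
next
  case False
  have "lang (deriv a r) \<subseteq> lang (pos_der B r)" and "lang (neg_der B r) \<subseteq> lang (deriv a r)"
    if "a \<in> B" for a
    using deriv_sandwich[OF that] by auto
  with False show ?thesis by (auto simp: Delta_def Nabla_def)
qed

end
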